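(* Let $C\in\mathcal C_n$, $A=\Xi^{-1}(C)$, and let $L$ be the $n\times n$ matrix with $L_{ij}=\sum_{k=1}^n kA_{i,j,k}$. Let $\Sigma(L)_{i,j}=\sum_{a=1}^i\sum_{b=1}^j L_{ab}$ and $\rho(C)=\sum_{0\le i,j,k\le n}C_{i,j,k}$. Then $$\rho(C)+\sum_{1\le i,j\le n}\Sigma(L)_{i,j}=\frac{n^2(n+1)^3}{4}.$$
   Context: Let $[n]=\{1,\dots,n\}$, $[0,n]=\{0,\dots,n\}$. A corner-sum hypermatrix of order $n$ is an integer array $C=(C_{i,j,k})_{i,j,k\in[0,n]}$ such that for all $i,j\in[0,n]$: $C_{i,j,0}=C_{i,0,j}=C_{0,i,j}=0$, $C_{i,j,n}=C_{i,n,j}=C_{n,i,j}=ij$, and for all $k\in[n]$ each of $C_{i,j,k}-C_{i,j,k-1}$, $C_{i,k,j}-C_{i,k-1,j}$, $C_{k,i,j}-C_{k-1,i,j}$ is an integer in $\{\max(0,i+j-n),\dots,\min(i,j)\}$; $\mathcal C_n$ is the set of these. For an array $C$ indexed by $[0,n]^3$, $\Xi^{-1}(C)$ is the array indexed by $[n]^3$ with $\Xi^{-1}(C)_{i,j,k}=C_{i,j,k}-C_{i-1,j,k}-C_{i,j-1,k}-C_{i,j,k-1}+C_{i-1,j-1,k}+C_{i-1,j,k-1}+C_{i,j-1,k-1}-C_{i-1,j-1,k-1}$. *)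

theory Defs
  imports Complex_Main
begin

(* A hypermatrix indexed by [0,n]^3 is a function nat => nat => nat => int;
   only the values at indices in {0..n} are relevant. *)

definition corner_sum_hypermatrices :: "nat \<Rightarrow> (nat \<Rightarrow> nat \<Rightarrow> nat \<Rightarrow> int) set" where
  "corner_sum_hypermatrices n = {C.
     (\<forall>i\<in>{0..n}. \<forall>j\<in>{0..n}.
        C i j 0 = 0 \<and> C i 0 j = 0 \<and> C 0 i j = 0 \<and>
        C i j n = int i * int j \<and> C i n j = int i * int j \<and> C n i j = int i * int j \<and>
        (\<forall>k\<in>{1..n}.
           let lo = max 0 (int i + int j - int n); hi = int (min i j) in
           C i j k - C i j (k - 1) \<in> {lo..hi} \<and>
           C i k j - C i (k - 1) j \<in> {lo..hi} \<and>
           C k i j - C (k - 1) i j \<in> {lo..hi}))}"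

(* Xi^{-1}(C), meaningful for indices in [n]^3 *)
definition Xi_inv :: "(nat \<Rightarrow> nat \<Rightarrow> nat \<Rightarrow> int) \<Rightarrow> nat \<Rightarrow> nat \<Rightarrow> nat \<Rightarrow> int" where
  "Xi_inv C i j k = C i j k - C (i-1) j k - C i (j-1) k - C i j (k-1)
      + C (i-1) (j-1) k + C (i-1) j (k-1) + C i (j-1) (k-1) - C (i-1) (j-1) (k-1)"

end

(* Only the boundary values of C matter. Summing Xi^{-1}(C) over the rectangle [1,i] x [1,j]
   in the first two coordinates telescopes to C(i,j,k) - C(i,j,k-1), since C vanishes on the
   faces i = 0 and j = 0; summation by parts in k then gives
   Sigma(L)_{i,j} = n C(i,j,n) - sum_{k<n} C(i,j,k). With C(i,j,n) = ij, every column (i,j)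
   contributes sum_k C(i,j,k) + Sigma(L)_{i,j} = (n+1) ij, and the total is
   (n+1) (n(n+1)/2)^2. *)
theory Submission
  imports Defs
begin

lemma sum_rectangle_mixed_differences:
  fixes F :: "nat \<Rightarrow> nat \<Rightarrow> 'a::ab_group_add"
  shows "(\<Sum>a=1..i. \<Sum>b=1..j. F a b - F (a-1) b - F a (b-1) + F (a-1) (b-1))
         = F i j - F 0 j - F i 0 + F 0 0"
proof (induction i)
  case 0
  then show ?case by simp
next
  case (Suc i)
  have "(\<Sum>b=1..j. F (Suc i) b - F i b - F (Suc i) (b-1) + F i (b-1))
        = F (Suc i) j - F i j - F (Suc i) 0 + F i 0"
    by (induction j) (simp_all add: algebra_simps)
  with Suc show ?case by (simp add: diff_add_eq add.assoc)
qed

lemma sum_of_nat_times_differences: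
  fixes g :: "nat \<Rightarrow> 'a::comm_ring_1"
  shows "(\<Sum>k=1..n. of_nat k * (g k - g (k-1))) = of_nat n * g n - (\<Sum>k<n. g k)"
  by (induction n) (simp_all add: algebra_simps)

lemma corner_sum_hypermatrix_boundary:
  assumes "C \<in> corner_sum_hypermatrices n" "i \<le> n" "j \<le> n"
  shows "C i j 0 = 0" "C i 0 j = 0" "C 0 i j = 0" "C i j n = int i * int j"
  using assms unfolding corner_sum_hypermatrices_def by auto

lemma Xi_inv_sum_rectangle:
  assumes "\<And>b m. b \<le> n \<Longrightarrow> m \<le> n \<Longrightarrow> C 0 b m = 0"
    and "\<And>a m. a \<le> n \<Longrightarrow> m \<le> n \<Longrightarrow> C a 0 m = 0"
    and "i \<le> n" "j \<le> n" "k \<le> n"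
  shows "(\<Sum>a=1..i. \<Sum>b=1..j. Xi_inv C a b k) = C i j k - C i j (k-1)"
proof -
  define D where "D a b = C a b k - C a b (k-1)" for a b
  have "(\<Sum>a=1..i. \<Sum>b=1..j. Xi_inv C a b k)
        = (\<Sum>a=1..i. \<Sum>b=1..j. D a b - D (a-1) b - D a (b-1) + D (a-1) (b-1))"
    unfolding D_def Xi_inv_def by (simp add: algebra_simps)
  also have "\<dots> = D i j - D 0 j - D i 0 + D 0 0"
    by (rule sum_rectangle_mixed_differences)
  also have "\<dots> = D i j"
    using assms unfolding D_def by simp
  finally show ?thesis
    unfolding D_def .
qed

lemma Xi_inv_weighted_sum_rectangle:
  assumes "\<And>b m. b \<le> n \<Longrightarrow> m \<le> n \<Longrightarrow> C 0 b m = 0"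
    and "\<And>a m. a \<le> n \<Longrightarrow> m \<le> n \<Longrightarrow> C a 0 m = 0"
    and "i \<le> n" "j \<le> n"
  shows "(\<Sum>a=1..i. \<Sum>b=1..j. \<Sum>k=1..n. int k * Xi_inv C a b k)
         = int n * C i j n - (\<Sum>k<n. C i j k)"
proof -
  have "(\<Sum>a=1..i. \<Sum>b=1..j. \<Sum>k=1..n. int k * Xi_inv C a b k)
        = (\<Sum>a=1..i. \<Sum>k=1..n. \<Sum>b=1..j. int k * Xi_inv C a b k)"
    by (rule sum.cong[OF refl], rule sum.swap)
  also have "\<dots> = (\<Sum>k=1..n. \<Sum>a=1..i. \<Sum>b=1..j. int k * Xi_inv C a b k)"
    by (rule sum.swap)
  also have "\<dots> = (\<Sum>k=1..n. int k * (\<Sum>a=1..i. \<Sum>b=1..j. Xi_inv C a b k))"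
    by (simp add: sum_distrib_left)
  also have "\<dots> = (\<Sum>k=1..n. int k * (C i j k - C i j (k-1)))"
    using Xi_inv_sum_rectangle[of n C i j] assms by simp
  also have "\<dots> = int n * C i j n - (\<Sum>k<n. C i j k)"
    by (rule sum_of_nat_times_differences)
  finally show ?thesis .
qed

lemma corner_sum_hypermatrix_column_identity:
  assumes "C \<in> corner_sum_hypermatrices n" "i \<le> n" "j \<le> n"
  shows "(\<Sum>k=0..n. C i j k) + (\<Sum>a=1..i. \<Sum>b=1..j. \<Sum>k=1..n. int k * Xi_inv C a b k)
         = (int n + 1) * (int i * int j)"
proof -
  have "(\<Sum>k=0..n. C i j k) = (\<Sum>k<n. C i j k) + C i j n"
    by (simp add: atLeast0AtMost lessThan_Suc_atMost[symmetric])
  with Xi_inv_weighted_sum_rectangle[of n C i j] corner_sum_hypermatrix_boundary[OF assms(1)] assms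
  show ?thesis
    by (simp add: algebra_simps)
qed

theorem mainTheorem14:
  fixes n :: nat and C :: "nat \<Rightarrow> nat \<Rightarrow> nat \<Rightarrow> int"
    and A :: "nat \<Rightarrow> nat \<Rightarrow> nat \<Rightarrow> int" and L :: "nat \<Rightarrow> nat \<Rightarrow> int"
  assumes "C \<in> corner_sum_hypermatrices n"
    and "A = Xi_inv C"
    and "L = (\<lambda>i j. \<Sum>k=1..n. int k * A i j k)"
  shows "rat_of_int ((\<Sum>i=0..n. \<Sum>j=0..n. \<Sum>k=0..n. C i j k)
            + (\<Sum>i=1..n. \<Sum>j=1..n. \<Sum>a=1..i. \<Sum>b=1..j. L a b))
         = of_nat n ^ 2 * (of_nat n + 1) ^ 3 / 4"
proof -
  \<comment> \<open>The rows i = 0 and j = 0 contribute empty rectangles.\<close>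
  have "(\<Sum>i=1..n. \<Sum>j=1..n. \<Sum>a=1..i. \<Sum>b=1..j. L a b)
        = (\<Sum>i=0..n. \<Sum>j=0..n. \<Sum>a=1..i. \<Sum>b=1..j. L a b)"
    by (simp add: sum.atLeast_Suc_atMost)
  then have "(\<Sum>i=0..n. \<Sum>j=0..n. \<Sum>k=0..n. C i j k)
            + (\<Sum>i=1..n. \<Sum>j=1..n. \<Sum>a=1..i. \<Sum>b=1..j. L a b)
        = (\<Sum>i=0..n. \<Sum>j=0..n. (int n + 1) * (int i * int j))"
    using corner_sum_hypermatrix_column_identity[OF assms(1)]
    by (simp add: assms(2,3) sum.distrib[symmetric])
  also have "\<dots> = (int n + 1) * (\<Sum>i=0..n. int i) ^ 2"
    unfolding power2_eq_square sum_product by (simp add: sum_distrib_left)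
  finally have "rat_of_int ((\<Sum>i=0..n. \<Sum>j=0..n. \<Sum>k=0..n. C i j k)
            + (\<Sum>i=1..n. \<Sum>j=1..n. \<Sum>a=1..i. \<Sum>b=1..j. L a b))
        = (of_nat n + 1) * (\<Sum>i=0..n. of_nat i) ^ 2"
    by simp
  also have "\<dots> = (of_nat n + 1) * (of_nat n * (of_nat n + 1) / 2) ^ 2"
    by (simp add: double_gauss_sum[of n, symmetric, where 'a = rat])
  finally show ?thesis
    by (simp add: power2_eq_square power3_eq_cube field_simps)
qed

end
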